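(* Let $w$ be a string of length $n$ with minimal period $p>1$, and let $k=\max\{l\ge 0 : w[1..l]=w[j..j+l-1]\text{ for some } j \text{ with } 1<j\le p\}$. Then the leftmost critical point of $w$ is the leftmost position $i>k+1$ of $w$ such that $i-\mu(i)<1$ or $i+\mu(i)-1>n$.
   Context: $w[i..j]=w[i]\cdots w[j]$ (empty if $i>j$), and substrings $w[j..j+l-1]$ are required to lie within $w$. A period of $w$ is an integer $p$ with $0<p\le n$ and $w[j]=w[j+p]$ for all $1\le j\le n-p$. For a position $i\in\{1,\dots,n\}$, the local period $\mu(i)$ is the least positive integer $\mu$ such that $w[j]=w[j+\mu]$ for all $j$ with $\max\{1,i-\mu\}\le j$ and $j+\mu\le\min\{n,i+\mu-1\}$. A position $i$ is a critical point of $w$ if $\mu(i)$ equals the minimal period of $w$. *)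

theory Defs
  imports Main
begin

text \<open>Strings are lists; positions are 1-based: the letter at position j of w is w ! (j - 1).\<close>

definition letter :: "'a list \<Rightarrow> nat \<Rightarrow> 'a" where
  "letter w j = w ! (j - 1)"

text \<open>Substring w[i..i+l-1] (assumed to lie within w).\<close>
definition substr :: "'a list \<Rightarrow> nat \<Rightarrow> nat \<Rightarrow> 'a list" where
  "substr w i l = take l (drop (i - 1) w)"

definition is_period :: "'a list \<Rightarrow> nat \<Rightarrow> bool" where
  "is_period w p \<longleftrightarrow> 0 < p \<and> p \<le> length w \<and>
     (\<forall>j. 1 \<le> j \<and> j \<le> length w - p \<longrightarrow> letter w j = letter w (j + p))"

definition min_period :: "'a list \<Rightarrow> nat" where
  "min_period w = (LEAST p. is_period w p)"

definition local_period :: "'a list \<Rightarrow> nat \<Rightarrow> nat" where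
  "local_period w i = (LEAST \<mu>. 0 < \<mu> \<and>
     (\<forall>j. max 1 (int i - int \<mu>) \<le> int j \<and> j + \<mu> \<le> min (length w) (i + \<mu> - 1)
          \<longrightarrow> letter w j = letter w (j + \<mu>)))"

definition critical_point :: "'a list \<Rightarrow> nat \<Rightarrow> bool" where
  "critical_point w i \<longleftrightarrow> 1 \<le> i \<and> i \<le> length w \<and> local_period w i = min_period w"

definition border_k :: "'a list \<Rightarrow> nat" where
  "border_k w = Max {l. \<exists>j. 1 < j \<and> j \<le> min_period w \<and> j + l - 1 \<le> length w \<and>
                            substr w 1 l = substr w j l}"

end

theory Submission
  imports Defs
begin

text \<open>
  Every nonempty word has a critical point at most p (the Critical Factorization Theorem):
  fix a linear order on the letters and take the lexicographically maximal suffixes for it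
  and for its reverse; the later of their starting positions is critical.
  Up to position k + 1 the local period is below p, because the occurrence of w[1..k] at some
  j \<le> p is a repetition of length j - 1 around each such position.
  Beyond k + 1, a repetition shorter than p reaching the left end of w would give a longer
  border or a smaller period, so every such left-external position is critical.
  A repetition reaching the right end of w persists at all later positions, so a
  right-external position before the leftmost critical point would itself be critical.
\<close>

subsection \<open>Local periods in 0-based form\<close>

text \<open>
  The cut c lies between the letters w ! (c - 1) and w ! c, i.e. before position c + 1;
  the repetition is truncated at both ends of w, as in the definition of the local period.
\<close>

definition local_repetition :: "'a list \<Rightarrow> nat \<Rightarrow> nat \<Rightarrow> bool" where
  "local_repetition w c m \<longleftrightarrow>
     (\<forall>t. c \<le> t + m \<longrightarrow> t < c \<longrightarrow> t + m < length w \<longrightarrow> w ! t = w ! (t + m))"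

lemma local_period_eq_Least:
  assumes "1 \<le> i"
  shows "local_period w i = (LEAST m. 0 < m \<and> local_repetition w (i - 1) m)"
proof -
  have "(\<forall>j. max 1 (int i - int m) \<le> int j \<and> j + m \<le> min (length w) (i + m - 1)
          \<longrightarrow> letter w j = letter w (j + m)) \<longleftrightarrow> local_repetition w (i - 1) m" for m
  proof
    assume H: "\<forall>j. max 1 (int i - int m) \<le> int j \<and> j + m \<le> min (length w) (i + m - 1)
          \<longrightarrow> letter w j = letter w (j + m)"
    show "local_repetition w (i - 1) m" unfolding local_repetition_def
    proof (intro allI impI)
      fix t assume "i - 1 \<le> t + m" "t < i - 1" "t + m < length w"
      then have "letter w (t + 1) = letter w (t + 1 + m)" by (intro H[rule_format]) auto
      then show "w ! t = w ! (t + m)" by (simp add: letter_def)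
    qed
  next
    assume H: "local_repetition w (i - 1) m"
    show "\<forall>j. max 1 (int i - int m) \<le> int j \<and> j + m \<le> min (length w) (i + m - 1)
          \<longrightarrow> letter w j = letter w (j + m)"
    proof (intro allI impI)
      fix j assume "max 1 (int i - int m) \<le> int j \<and> j + m \<le> min (length w) (i + m - 1)"
      then have "1 \<le> j" "w ! (j - 1) = w ! (j - 1 + m)"
        using H assms unfolding local_repetition_def by auto
      then show "letter w j = letter w (j + m)" by (simp add: letter_def)
    qed
  qed
  then show ?thesis unfolding local_period_def by presburger
qed

lemma is_period_iff_nth:
  "is_period w p \<longleftrightarrow> 0 < p \<and> p \<le> length w \<and> (\<forall>t. t + p < length w \<longrightarrow> w ! t = w ! (t + p))"
proof -
  have "(\<forall>j. 1 \<le> j \<and> j \<le> length w - p \<longrightarrow> letter w j = letter w (j + p)) \<longleftrightarrow>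
        (\<forall>t. t + p < length w \<longrightarrow> w ! t = w ! (t + p))" if "p \<le> length w"
  proof
    assume H: "\<forall>j. 1 \<le> j \<and> j \<le> length w - p \<longrightarrow> letter w j = letter w (j + p)"
    show "\<forall>t. t + p < length w \<longrightarrow> w ! t = w ! (t + p)"
    proof (intro allI impI)
      fix t assume "t + p < length w"
      then have "letter w (t + 1) = letter w (t + 1 + p)" using H[rule_format, of "t + 1"] by auto
      then show "w ! t = w ! (t + p)" by (simp add: letter_def)
    qed
  next
    assume H: "\<forall>t. t + p < length w \<longrightarrow> w ! t = w ! (t + p)"
    show "\<forall>j. 1 \<le> j \<and> j \<le> length w - p \<longrightarrow> letter w j = letter w (j + p)"
    proof (intro allI impI)
      fix j assume "1 \<le> j \<and> j \<le> length w - p"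
      then have "1 \<le> j" "j - 1 + p < length w" using that by auto
      then have "1 \<le> j" "w ! (j - 1) = w ! (j - 1 + p)" using H by blast+
      then show "letter w j = letter w (j + p)" by (simp add: letter_def)
    qed
  qed
  then show ?thesis unfolding is_period_def by blast
qed

lemma is_period_min_period:
  assumes "w \<noteq> []"
  shows "is_period w (min_period w)"
  unfolding min_period_def
proof (rule LeastI)
  show "is_period w (length w)" using assms by (simp add: is_period_iff_nth)
qed

lemma min_period_le_nth_period:
  assumes "w \<noteq> []" "0 < m" "\<forall>t. t + m < length w \<longrightarrow> w ! t = w ! (t + m)"
  shows "min_period w \<le> m"
proof (cases "m \<le> length w")
  case True
  then have "is_period w m" using assms(2,3) unfolding is_period_iff_nth by blast
  then show ?thesis unfolding min_period_def by (rule Least_le)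
next
  case False
  have "is_period w (length w)" using assms(1) by (simp add: is_period_iff_nth)
  then have "min_period w \<le> length w" unfolding min_period_def by (rule Least_le)
  with False show ?thesis by simp
qed

lemma local_repetition_is_period:
  "is_period w p \<Longrightarrow> local_repetition w c p"
  by (simp add: is_period_iff_nth local_repetition_def)

lemma local_repetition_trivial: "local_repetition w c (Suc (length w))"
  by (simp add: local_repetition_def)

lemma local_repetition_covering:
  assumes "local_repetition w c m" "c \<le> m" "length w \<le> c + m"
  shows "\<forall>t. t + m < length w \<longrightarrow> w ! t = w ! (t + m)"
  using assms by (auto simp: local_repetition_def)

lemma local_repetition_shift_right:
  assumes "local_repetition w c m" "length w \<le> c + m" "c \<le> c'"
  shows "local_repetition w c' m"
  using assms by (auto simp: local_repetition_def)

lemma local_period_local_repetition: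
  assumes "1 \<le> i"
  shows "0 < local_period w i \<and> local_repetition w (i - 1) (local_period w i)"
  unfolding local_period_eq_Least[OF assms]
  by (rule LeastI[of _ "Suc (length w)"]) (simp add: local_repetition_trivial)

lemma local_period_le:
  assumes "1 \<le> i" "0 < m" "local_repetition w (i - 1) m"
  shows "local_period w i \<le> m"
  unfolding local_period_eq_Least[OF assms(1)] by (rule Least_le) (use assms in simp)

lemma local_period_le_min_period:
  assumes "w \<noteq> []" "1 \<le> i"
  shows "local_period w i \<le> min_period w"
  using is_period_min_period[OF assms(1)]
  by (intro local_period_le assms(2) local_repetition_is_period) (simp add: is_period_def)

subsection \<open>Critical factorization via maximal suffixes\<close>

definition max_suffix :: "'a rel \<Rightarrow> 'a list \<Rightarrow> nat \<Rightarrow> bool" where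
  "max_suffix r w c \<longleftrightarrow>
     c < length w \<and> (\<forall>c' < length w. c' \<noteq> c \<longrightarrow> (drop c' w, drop c w) \<in> lexord r)"

lemma strict_linear_order_exists: "\<exists>r :: 'a rel. strict_linear_order r"
proof -
  obtain r :: "'a rel" where "Well_order r" "Field r = UNIV"
    using well_ordering by (elim exE conjE)
  then have "linear_order r" by (simp add: well_order_on_def)
  then have "strict_linear_order (r - Id)" by (rule strict_linear_order_on_diff_Id)
  then show ?thesis ..
qed

lemma max_suffix_exists:
  assumes "strict_linear_order r" "w \<noteq> []"
  shows "\<exists>c. max_suffix r w c"
proof -
  have "trans (lexord r)" "total (lexord r)"
    using assms(1) by (simp_all add: strict_linear_order_on_def lexord_transI total_lexord)
  moreover have "drop c w \<noteq> drop c' w" if "c < length w" "c' < length w" "c \<noteq> c'" for c c'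
  proof
    assume "drop c w = drop c' w"
    then have "length (drop c w) = length (drop c' w)" by simp
    with that show False by simp
  qed
  ultimately have "\<exists>c \<in> {..<length w}. \<forall>c' \<in> {..<length w}. c' \<noteq> c \<longrightarrow> (drop c' w, drop c w) \<in> lexord r"
    using assms(2)
    by (intro Finite_Set.bex_greatest_element)
      (auto simp: transp_on_def totalp_on_def total_on_def intro: transD[of "lexord r"])
  then show ?thesis unfolding max_suffix_def by auto
qed

lemma take_drop_eq_if_nth_shift:
  assumes "\<forall>t < l. w ! (a + t) = w ! (b + t)" "a + l \<le> length w" "b + l \<le> length w"
  shows "take l (drop a w) = take l (drop b w)"
  using assms by (intro nth_equalityI) auto

lemma lexord_drop_common_prefix:
  assumes "irrefl r" "(x, y) \<in> lexord r" "take d x = take d y"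
  shows "(drop d x, drop d y) \<in> lexord r"
proof -
  have "(take d x @ drop d x, take d y @ drop d y) \<in> lexord r"
    using assms(2) by simp
  then have "(take d x @ drop d x, take d x @ drop d y) \<in> lexord r"
    unfolding assms(3) .
  then show ?thesis using lexord_same_pref_if_irrefl[OF assms(1)] by blast
qed

lemma lexord_and_converse_imp_prefix:
  assumes "asym r" "(x, y) \<in> lexord r" "(x, y) \<in> lexord (r\<inverse>)"
  shows "take (length x) y = x"
  using assms(2,3)
proof (induction x arbitrary: y)
  case (Cons a x y)
  then obtain b y' where "y = b # y'" by (cases y) auto
  with Cons assms(1) show ?case by (auto dest: asymD)
qed simp

lemma asym_if_strict_linear_order: "strict_linear_order r \<Longrightarrow> asym r"
  by (simp add: strict_linear_order_on_def asym_on_iff_irrefl_on_if_trans_on)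

lemma max_suffix_no_left_repetition:
  assumes r: "strict_linear_order r" and c: "max_suffix r w c"
    and m: "0 < m" "m \<le> c" and rep: "local_repetition w c m"
  shows False
proof -
  define s where "s = c - m"
  have irr: "irrefl r" using r by (simp add: strict_linear_order_on_def)
  have asym: "asym (lexord r)" using asym_if_strict_linear_order[OF r] by (rule lexord_asym)
  have s_less: "(drop s w, drop c w) \<in> lexord r"
    using c m unfolding max_suffix_def s_def by auto
  have shift: "\<forall>t < l. w ! (s + t) = w ! (c + t)" if "l \<le> m" "c + l \<le> length w" for l
    using rep m that unfolding local_repetition_def s_def
    by (auto dest: spec[of _ "c - m + _"])
  show False
  proof (cases "c + m \<le> length w")
    case True
    have "take m (drop s w) = take m (drop c w)"
      using shift[of m] True by (intro take_drop_eq_if_nth_shift) (auto simp: s_def)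
    from lexord_drop_common_prefix[OF irr s_less this]
    have c_less: "(drop c w, drop (c + m) w) \<in> lexord r"
      using m by (simp add: s_def add.commute)
    show False
    proof (cases "c + m = length w")
      case True
      with c_less show False by simp
    next
      case False
      then have "(drop (c + m) w, drop c w) \<in> lexord r"
        using c m \<open>c + m \<le> length w\<close> unfolding max_suffix_def by auto
      with c_less asym show False by (auto dest: asymD)
    qed
  next
    case False
    have "take (length w - c) (drop s w) = take (length w - c) (drop c w)"
      using shift[of "length w - c"] False c
      by (intro take_drop_eq_if_nth_shift) (auto simp: s_def max_suffix_def)
    then have "(drop c w, drop s w) \<in> lexord r"
      using c m unfolding lexord_take_index_conv max_suffix_def s_def by auto
    with s_less asym show False by (auto dest: asymD)
  qed
qed

lemma max_suffixes_right_repetition_periodic: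
  assumes r: "strict_linear_order r"
    and c: "max_suffix r w c" and c': "max_suffix (r\<inverse>) w c'" and "c' \<le> c"
    and m: "c < m" "c + m < length w" and rep: "local_repetition w c m"
  shows "\<forall>t. t + m < length w \<longrightarrow> w ! t = w ! (t + m)"
proof -
  have irr': "irrefl (r\<inverse>)" using r by (simp add: strict_linear_order_on_def)
  have left: "w ! t = w ! (t + m)" if "t < c" for t
    using m that by (intro rep[unfolded local_repetition_def, rule_format]) auto
  have "(drop (c' + m) w, drop c' w) \<in> lexord (r\<inverse>)"
    using c' \<open>c' \<le> c\<close> m unfolding max_suffix_def by simp
  moreover have "take (c - c') (drop (c' + m) w) = take (c - c') (drop c' w)"
  proof (rule take_drop_eq_if_nth_shift)
    show "\<forall>t < c - c'. w ! (c' + m + t) = w ! (c' + t)"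
    proof (intro allI impI)
      fix t assume "t < c - c'"
      then have "w ! (c' + t) = w ! (c' + t + m)" by (intro left) simp
      then show "w ! (c' + m + t) = w ! (c' + t)" by (simp add: ac_simps)
    qed
  qed (use \<open>c' \<le> c\<close> m in auto)
  ultimately have "(drop (c - c') (drop (c' + m) w), drop (c - c') (drop c' w)) \<in> lexord (r\<inverse>)"
    by (rule lexord_drop_common_prefix[OF irr'])
  then have less_conv: "(drop (c + m) w, drop c w) \<in> lexord (r\<inverse>)"
    using \<open>c' \<le> c\<close> by (simp add: add.commute)
  have less: "(drop (c + m) w, drop c w) \<in> lexord r"
    using c m unfolding max_suffix_def by simp
  from lexord_and_converse_imp_prefix[OF asym_if_strict_linear_order[OF r] less less_conv]
  have prefix: "take (length (drop (c + m) w)) (drop c w) = drop (c + m) w" .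
  have right: "w ! (c + t) = w ! (c + m + t)" if "t < length w - (c + m)" for t
  proof -
    have "take (length (drop (c + m) w)) (drop c w) ! t = drop (c + m) w ! t"
      by (simp only: prefix)
    then show ?thesis using that by simp
  qed
  show ?thesis
  proof (intro allI impI)
    fix t assume "t + m < length w"
    show "w ! t = w ! (t + m)"
    proof (cases "t < c")
      case False
      then show ?thesis
        using right[of "t - c"] \<open>t + m < length w\<close> by (simp add: add.commute add.left_commute)
    qed (rule left)
  qed
qed

lemma max_suffixes_critical:
  assumes r: "strict_linear_order r"
    and c: "max_suffix r w c" and c': "max_suffix (r\<inverse>) w c'" and "c' \<le> c"
  shows "c < min_period w \<and> (\<forall>m. 0 < m \<longrightarrow> m < min_period w \<longrightarrow> \<not> local_repetition w c m)"
proof -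
  have "w \<noteq> []" using c by (auto simp: max_suffix_def)
  note per = is_period_min_period[OF this]
  have p_pos: "0 < min_period w" using per by (simp add: is_period_def)
  have "\<not> local_repetition w c m" if m: "0 < m" "m < min_period w" for m
  proof
    assume rep: "local_repetition w c m"
    consider "m \<le> c" | "c < m" "length w \<le> c + m" | "c < m" "c + m < length w"
      by linarith
    then show False
    proof cases
      case 1
      with max_suffix_no_left_repetition[OF r c m(1) _ rep] show False by blast
    next
      case 2
      then have "min_period w \<le> m"
        using local_repetition_covering[OF rep] by (intro min_period_le_nth_period \<open>w \<noteq> []\<close> m(1)) simp
      with m show False by simp
    next
      case 3
      then have "min_period w \<le> m"
        using max_suffixes_right_repetition_periodic[OF r c c' \<open>c' \<le> c\<close> _ _ rep]
        by (intro min_period_le_nth_period \<open>w \<noteq> []\<close> m(1)) simp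
      with m show False by simp
    qed
  qed
  moreover have "c < min_period w"
  proof (rule ccontr)
    assume "\<not> c < min_period w"
    then show False
      using max_suffix_no_left_repetition[OF r c p_pos] local_repetition_is_period[OF per] by simp
  qed
  ultimately show ?thesis by blast
qed

theorem critical_factorization:
  assumes "w \<noteq> []"
  shows "\<exists>c < min_period w. \<forall>m. 0 < m \<longrightarrow> m < min_period w \<longrightarrow> \<not> local_repetition w c m"
proof -
  obtain r :: "'a rel" where r: "strict_linear_order r"
    using strict_linear_order_exists by (elim exE)
  then have r': "strict_linear_order (r\<inverse>)" by (simp add: strict_linear_order_on_def)
  obtain c where c: "max_suffix r w c" using max_suffix_exists[OF r assms] by (elim exE)
  obtain c' where c': "max_suffix (r\<inverse>) w c'" using max_suffix_exists[OF r' assms] by (elim exE)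
  show ?thesis
  proof (cases "c' \<le> c")
    case True
    from max_suffixes_critical[OF r c c' True] show ?thesis by blast
  next
    case False
    from c have "max_suffix ((r\<inverse>)\<inverse>) w c" by simp
    from max_suffixes_critical[OF r' c' this] False show ?thesis by auto
  qed
qed

subsection \<open>Critical points and the border\<close>

lemma critical_point_exists:
  assumes "w \<noteq> []"
  shows "\<exists>i \<le> min_period w. critical_point w i"
proof -
  obtain c where c: "c < min_period w"
    and no_rep: "\<forall>m. 0 < m \<longrightarrow> m < min_period w \<longrightarrow> \<not> local_repetition w c m"
    using critical_factorization[OF assms] by blast
  have "0 < local_period w (c + 1)" "local_repetition w c (local_period w (c + 1))"
    using local_period_local_repetition[of "c + 1" w] by simp_all
  with no_rep have "\<not> local_period w (c + 1) < min_period w" by blast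
  with local_period_le_min_period[OF assms, of "c + 1"]
  have "local_period w (c + 1) = min_period w" by simp
  moreover have "min_period w \<le> length w"
    using is_period_min_period[OF assms] by (simp add: is_period_def)
  ultimately have "critical_point w (c + 1)"
    using c by (simp add: critical_point_def)
  with c show ?thesis by (intro exI[of _ "c + 1"]) simp
qed

lemma le_border_k:
  assumes "0 < m" "m < min_period w" "m + l \<le> length w" "\<forall>t < l. w ! t = w ! (t + m)"
  shows "l \<le> border_k w"
  unfolding border_k_def
proof (rule Max_ge)
  show "finite {l. \<exists>j. 1 < j \<and> j \<le> min_period w \<and> j + l - 1 \<le> length w \<and>
                       substr w 1 l = substr w j l}"
    by (rule finite_subset[of _ "{..length w}"]) auto
  have "substr w 1 l = substr w (m + 1) l"
    using assms(3,4) unfolding substr_def by (intro nth_equalityI) (auto simp: add.commute)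
  then show "l \<in> {l. \<exists>j. 1 < j \<and> j \<le> min_period w \<and> j + l - 1 \<le> length w \<and>
                       substr w 1 l = substr w j l}"
    using assms(1-3) by (intro CollectI exI[of _ "m + 1"]) auto
qed

lemma border_k_witness:
  assumes "w \<noteq> []" "1 < min_period w"
  shows "\<exists>m. 0 < m \<and> m < min_period w \<and> (\<forall>t < border_k w. w ! t = w ! (t + m))"
proof -
  let ?B = "{l. \<exists>j. 1 < j \<and> j \<le> min_period w \<and> j + l - 1 \<le> length w \<and>
                  substr w 1 l = substr w j l}"
  have "finite ?B" by (rule finite_subset[of _ "{..length w}"]) auto
  moreover have "0 \<in> ?B"
    using assms by (intro CollectI exI[of _ 2]) (auto simp: substr_def Suc_le_eq)
  then have "?B \<noteq> {}" by blast
  ultimately have "border_k w \<in> ?B" unfolding border_k_def by (rule Max_in)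
  then obtain j where j: "1 < j" "j \<le> min_period w" "j + border_k w - 1 \<le> length w"
    and eq: "take (border_k w) w = take (border_k w) (drop (j - 1) w)"
    unfolding substr_def by auto
  have "w ! t = w ! (t + (j - 1))" if "t < border_k w" for t
  proof -
    have "take (border_k w) w ! t = take (border_k w) (drop (j - 1) w) ! t" by (simp only: eq)
    then show ?thesis using that j by (simp add: add.commute)
  qed
  with j show ?thesis by (intro exI[of _ "j - 1"]) auto
qed

lemma local_period_less_min_period_upto_border:
  assumes "w \<noteq> []" "1 < min_period w" "1 \<le> i" "i \<le> border_k w + 1"
  shows "local_period w i < min_period w"
proof -
  obtain m where m: "0 < m" "m < min_period w" and shift: "\<forall>t < border_k w. w ! t = w ! (t + m)"
    using border_k_witness[OF assms(1,2)] by blast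
  have "local_repetition w (i - 1) m"
    unfolding local_repetition_def
  proof (intro allI impI)
    fix t assume "t < i - 1"
    with assms(4) show "w ! t = w ! (t + m)" by (intro shift[rule_format]) linarith
  qed
  from local_period_le[OF assms(3) m(1) this] m(2) show ?thesis by simp
qed

lemma local_period_eq_min_period_beyond_border:
  assumes "border_k w + 1 < i" "i \<le> length w" "i \<le> local_period w i"
  shows "local_period w i = min_period w"
proof (rule ccontr)
  define m where "m = local_period w i"
  have "w \<noteq> []" "1 \<le> i" using assms(1,2) by auto
  assume "local_period w i \<noteq> min_period w"
  with local_period_le_min_period[OF \<open>w \<noteq> []\<close> \<open>1 \<le> i\<close>]
  have "m < min_period w" unfolding m_def by simp
  moreover have "0 < m" and rep: "local_repetition w (i - 1) m"
    using local_period_local_repetition[OF \<open>1 \<le> i\<close>] unfolding m_def by auto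
  moreover have "i \<le> m" using assms(3) unfolding m_def .
  ultimately show False
  proof (cases "i - 1 + m \<le> length w")
    case True
    have "\<forall>t < i - 1. w ! t = w ! (t + m)"
      using \<open>i \<le> m\<close> True by (auto intro: rep[unfolded local_repetition_def, rule_format])
    moreover have "m + (i - 1) \<le> length w" using True by simp
    ultimately have "i - 1 \<le> border_k w"
      using le_border_k \<open>0 < m\<close> \<open>m < min_period w\<close> by blast
    with assms(1) show False by simp
  next
    case False
    with \<open>i \<le> m\<close> have "min_period w \<le> m"
      using local_repetition_covering[OF rep]
      by (intro min_period_le_nth_period \<open>w \<noteq> []\<close> \<open>0 < m\<close>) simp
    with \<open>m < min_period w\<close> show False by simp
  qed
qed

lemma local_period_antimono_right_external:
  assumes "1 \<le> i" "i \<le> i'" "length w < i + local_period w i - 1"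
  shows "local_period w i' \<le> local_period w i"
proof -
  have pos: "0 < local_period w i" and rep: "local_repetition w (i - 1) (local_period w i)"
    using local_period_local_repetition[OF assms(1)] by auto
  have "local_repetition w (i' - 1) (local_period w i)"
    by (rule local_repetition_shift_right[OF rep]) (use assms in linarith)+
  with assms(1,2) pos show ?thesis by (intro local_period_le) simp_all
qed
theorem lemma4:
  fixes w :: "'a list"
  assumes "w \<noteq> []" and "min_period w > 1"
  shows "\<exists>i. critical_point w i \<and> (\<forall>i'. critical_point w i' \<longrightarrow> i \<le> i') \<and>
             (border_k w + 1 < i \<and> i \<le> length w \<and>
              (int i - int (local_period w i) < 1 \<or> i + local_period w i - 1 > length w)) \<and>
             (\<forall>i'. border_k w + 1 < i' \<and> i' \<le> length w \<and>
              (int i' - int (local_period w i') < 1 \<or> i' + local_period w i' - 1 > length w)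
              \<longrightarrow> i \<le> i')"
proof -
  obtain c where "c \<le> min_period w" "critical_point w c"
    using critical_point_exists[OF assms(1)] by blast
  define i0 where "i0 = (LEAST i. critical_point w i)"
  have crit: "critical_point w i0" unfolding i0_def by (rule LeastI) fact
  have least: "\<forall>i'. critical_point w i' \<longrightarrow> i0 \<le> i'" unfolding i0_def by (blast intro: Least_le)
  with \<open>critical_point w c\<close> \<open>c \<le> min_period w\<close> have "i0 \<le> min_period w" by fastforce
  from crit have i0: "1 \<le> i0" "i0 \<le> length w" "local_period w i0 = min_period w"
    unfolding critical_point_def by auto
  have "border_k w + 1 < i0"
    using local_period_less_min_period_upto_border[OF assms i0(1)] i0(3) by fastforce
  moreover have "int i0 - int (local_period w i0) < 1"
    using i0(3) \<open>i0 \<le> min_period w\<close> by simp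
  moreover have "i0 \<le> i'"
    if "border_k w + 1 < i'" "i' \<le> length w"
      "int i' - int (local_period w i') < 1 \<or> length w < i' + local_period w i' - 1" for i'
  proof (rule ccontr)
    assume "\<not> i0 \<le> i'"
    from that(3) have "local_period w i' = min_period w"
    proof
      assume "int i' - int (local_period w i') < 1"
      with that(1,2) show ?thesis by (intro local_period_eq_min_period_beyond_border) simp_all
    next
      assume "length w < i' + local_period w i' - 1"
      then have "local_period w i0 \<le> local_period w i'"
        using that(1) \<open>\<not> i0 \<le> i'\<close> by (intro local_period_antimono_right_external) simp_all
      with i0(3) local_period_le_min_period[OF assms(1), of i'] that(1) show ?thesis by simp
    qed
    with that(1,2) have "critical_point w i'" unfolding critical_point_def by simp
    with least \<open>\<not> i0 \<le> i'\<close> show False by blast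
  qed
  ultimately show ?thesis using crit least i0(2) by blast
qed

end
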